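(* Suppose the basis $\{t^i\}$ of the weak quantum Lie algebra $\mathfrak l_h(\mathfrak g)$ satisfies $$\Delta(t^i)=C\otimes t^i+t^j\otimes f_j{}^i$$ for some central element $C\in U_h(\mathfrak g)$ and some elements $f_j{}^i\in U_h(\mathfrak g)$. Define right multiplication of left-invariant one-forms by functions by $\omega^L_i\,a=a_{(1)}\,f_i{}^j(a_{(2)})\,\omega^L_j$, extended to $\Omega$ by $(b\,\omega^L_i)\,a=b\,(\omega^L_i\,a)$, and define $c(a)=a_{(1)}\,C(a_{(2)})$ for $a\in\mathcal F_h(G)$. Then for all $a,b\in\mathcal F_h(G)$, $$d(ab)=c(a)\,(db)+(da)\,b .$$
   Context: $\mathfrak g$ is a finite-dimensional complex simple Lie algebra, $G$ the connected simply-connected complex Lie group with Lie algebra $\mathfrak g$, $U_h(\mathfrak g)$ Drinfeld's quantized enveloping algebra over $\mathbb C[[h]]$ (coproduct $\Delta$, antipode $S$); Sweedler notation, repeated indices summed. Adjoint action: $(\mathrm{ad}\,x)\,y=x_{(2)}\,y\,S^{-1}(x_{(1)})$. $\mathcal F_h(G)$ is the $\mathbb C[[h]]$-span of matrix elements $\pi^\mu{}_a{}^b$ of all finite-dimensional indecomposable $U_h(\mathfrak g)$-modules, with coproduct $\Delta(\pi^\mu{}_a{}^b)=\pi^\mu{}_a{}^c\otimes\pi^\mu{}_c{}^b$ and product $(fg)(x)=(f\otimes g)(\Delta x)$; for $u\in U_h(\mathfrak g)$ and $a\in\mathcal F_h(G)$ write $u(a):=a(u)$. $\pi^\Psi$ is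 the adjoint representation of $U_h(\mathfrak g)$. A weak quantum Lie algebra $\mathfrak l_h(\mathfrak g)\subset U_h(\mathfrak g)$ is an adjoint submodule generating $U_h(\mathfrak g)$ with basis $\{t^i\}$ satisfying $(\mathrm{ad}\,x)\,t^i=t^j\,\pi^\Psi{}_j{}^i(x)$. Left-invariant vector fields $t^i_L(a)=a_{(1)}t^i(a_{(2)})$; vector fields form the right $\mathcal F_h(G)$-module freely generated by the $t^i_L$, with $(v\,a)(b)=v(b)\,a$. Left-invariant one-forms $\omega^L_i$ satisfy $\omega^L_i(t^j_L\,a)=\delta_i{}^j a$; $\Omega$ is the left $\mathcal F_h(G)$-module freely generated by them, with $(a\,\omega)(v)=a\,\omega(v)$. The exterior differential is $da(v)=v(a)$ for all vector fields $v$, so that $da=t^i_L(a)\,\omega^L_i$. *)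

theory Defs
  imports Main
begin

text \<open>
Abstract model of the data used in the statement.
  'k : the ground ring C[[h]]
  'u : U_h(g), a 'k-algebra (scalar action smult)
  't : the (completed) tensor square U_h(g) (x) U_h(g), a 'k-algebra, with
       pure tensors  tensor x y
  cop : the coproduct Delta : U -> U (x) U (an algebra homomorphism)
  F  : F_h(G), a set of 'k-linear functionals on U
  ev a b T : the pairing (a (x) b)(T) of F (x) F with U (x) U
\<close>

locale qea_pairing =
  fixes smult :: "'k::comm_ring_1 \<Rightarrow> 'u::ring_1 \<Rightarrow> 'u"
    and smultT :: "'k \<Rightarrow> 't::ring_1 \<Rightarrow> 't"
    and tensor :: "'u \<Rightarrow> 'u \<Rightarrow> 't"
    and ev :: "('u \<Rightarrow> 'k) \<Rightarrow> ('u \<Rightarrow> 'k) \<Rightarrow> 't \<Rightarrow> 'k"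
    and cop :: "'u \<Rightarrow> 't"
    and F :: "('u \<Rightarrow> 'k) set"
  assumes smult_add: "smult c (x + y) = smult c x + smult c y"
    and smult_add2: "smult (c + d) x = smult c x + smult d x"
    and smult_assoc: "smult (c * d) x = smult c (smult d x)"
    and smult_one: "smult 1 x = x"
    and smult_mult_left: "smult c (x * y) = smult c x * y"
    and smult_mult_right: "smult c (x * y) = x * smult c y"
    and smultT_add: "smultT c (T + T') = smultT c T + smultT c T'"
    and smultT_add2: "smultT (c + d) T = smultT c T + smultT d T"
    and smultT_assoc: "smultT (c * d) T = smultT c (smultT d T)"
    and smultT_one: "smultT 1 T = T"
    and smultT_mult_left: "smultT c (T * T') = smultT c T * T'"
    and smultT_mult_right: "smultT c (T * T') = T * smultT c T'"
    and tensor_add_left: "tensor (x + x') y = tensor x y + tensor x' y"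
    and tensor_add_right: "tensor x (y + y') = tensor x y + tensor x y'"
    and tensor_smult_left: "tensor (smult c x) y = smultT c (tensor x y)"
    and tensor_smult_right: "tensor x (smult c y) = smultT c (tensor x y)"
    and tensor_mult: "tensor x y * tensor x' y' = tensor (x * x') (y * y')"
    and tensor_one: "tensor 1 1 = 1"
    and cop_add: "cop (x + y) = cop x + cop y"
    and cop_smult: "cop (smult c x) = smultT c (cop x)"
    and cop_mult: "cop (x * y) = cop x * cop y"
    and cop_one: "cop 1 = 1"
    and F_add: "a \<in> F \<Longrightarrow> a (x + y) = a x + a y"
    and F_smult: "a \<in> F \<Longrightarrow> a (smult c x) = c * a x"
    and F_transl_left: "a \<in> F \<Longrightarrow> (\<lambda>z. a (p * z)) \<in> F"
    and F_transl_right: "a \<in> F \<Longrightarrow> (\<lambda>z. a (z * p)) \<in> F"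
    and F_mult: "a \<in> F \<Longrightarrow> b \<in> F \<Longrightarrow> (\<lambda>x. ev a b (cop x)) \<in> F"
    and ev_add: "a \<in> F \<Longrightarrow> b \<in> F \<Longrightarrow> ev a b (T + T') = ev a b T + ev a b T'"
    and ev_smult: "a \<in> F \<Longrightarrow> b \<in> F \<Longrightarrow> ev a b (smultT c T) = c * ev a b T"
    and ev_tensor: "a \<in> F \<Longrightarrow> b \<in> F \<Longrightarrow> ev a b (tensor x y) = a x * b y"
    and ev_transl_left: "a \<in> F \<Longrightarrow> b \<in> F \<Longrightarrow>
          ev a b (tensor p q * T) = ev (\<lambda>z. a (p * z)) (\<lambda>z. b (q * z)) T"
    and ev_transl_right: "a \<in> F \<Longrightarrow> b \<in> F \<Longrightarrow>
          ev a b (T * tensor p q) = ev (\<lambda>z. a (z * p)) (\<lambda>z. b (z * q)) T"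

text \<open>Weak quantum Lie algebra with basis t (finite index type 'i).
  adT T y is the linear map induced by p (x) q |-> q y S^{-1}(p), so that
  (ad x) y = adT (cop x) y = x_(2) y S^{-1}(x_(1)).\<close>

locale weak_qlie = qea_pairing smult smultT tensor ev cop F
  for smult :: "'k::comm_ring_1 \<Rightarrow> 'u::ring_1 \<Rightarrow> 'u"
    and smultT :: "'k \<Rightarrow> 't::ring_1 \<Rightarrow> 't"
    and tensor :: "'u \<Rightarrow> 'u \<Rightarrow> 't"
    and ev :: "('u \<Rightarrow> 'k) \<Rightarrow> ('u \<Rightarrow> 'k) \<Rightarrow> 't \<Rightarrow> 'k"
    and cop :: "'u \<Rightarrow> 't"
    and F :: "('u \<Rightarrow> 'k) set" +
  fixes t :: "'i::finite \<Rightarrow> 'u"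
    and sinv :: "'u \<Rightarrow> 'u"
    and adT :: "'t \<Rightarrow> 'u \<Rightarrow> 'u"
    and piPsi :: "'i \<Rightarrow> 'i \<Rightarrow> 'u \<Rightarrow> 'k"
  assumes adT_tensor: "adT (tensor p q) y = q * y * sinv p"
    and adT_add: "adT (T + T') y = adT T y + adT T' y"
    and adT_smult: "adT (smultT c T) y = smult c (adT T y)"
    and t_lin_indep: "(\<Sum>i\<in>UNIV. smult (cf i) (t i)) = 0 \<Longrightarrow> cf i = 0"
    and ad_t: "adT (cop x) (t i) = (\<Sum>j\<in>UNIV. smult (piPsi j i x) (t j))"

definition fmult :: "(('u \<Rightarrow> 'k) \<Rightarrow> ('u \<Rightarrow> 'k) \<Rightarrow> 't \<Rightarrow> 'k) \<Rightarrow> ('u \<Rightarrow> 't)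
     \<Rightarrow> ('u \<Rightarrow> 'k) \<Rightarrow> ('u \<Rightarrow> 'k) \<Rightarrow> ('u \<Rightarrow> 'k)" where
  "fmult ev cop a b = (\<lambda>x. ev a b (cop x))"

text \<open>a_(1) u(a_(2)), written out: evaluated at x it is a(x u).  This gives the
  left-invariant vector field u_L(a) (for u = t^i), the function c(a) (for u = C),
  and a_(1) f_i^j(a_(2)) (for u = f_i^j).\<close>
definition linv :: "'u::times \<Rightarrow> ('u \<Rightarrow> 'k) \<Rightarrow> ('u \<Rightarrow> 'k)" where
  "linv u a = (\<lambda>x. a (x * u))"

text \<open>One-forms: elements of the free left F-module on the omega^L_i, represented by
  their coefficient family  i |-> coefficient of omega^L_i.\<close>
type_synonym ('i, 'u, 'k) oneform = "'i \<Rightarrow> ('u \<Rightarrow> 'k)"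

definition oneform_add :: "('i, 'u, 'k::plus) oneform \<Rightarrow> ('i, 'u, 'k) oneform \<Rightarrow> ('i, 'u, 'k) oneform" where
  "oneform_add w v = (\<lambda>i x. w i x + v i x)"

definition lmult :: "(('u \<Rightarrow> 'k) \<Rightarrow> ('u \<Rightarrow> 'k) \<Rightarrow> 't \<Rightarrow> 'k) \<Rightarrow> ('u \<Rightarrow> 't)
     \<Rightarrow> ('u \<Rightarrow> 'k) \<Rightarrow> ('i, 'u, 'k) oneform \<Rightarrow> ('i, 'u, 'k) oneform" where
  "lmult ev cop b w = (\<lambda>i. fmult ev cop b (w i))"

text \<open>Right multiplication: omega^L_i a = a_(1) f_i^j(a_(2)) omega^L_j, extended by
  (b omega^L_i) a = b (omega^L_i a); here f i j stands for f_i^j.\<close>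
definition rmult :: "(('u \<Rightarrow> 'k) \<Rightarrow> ('u \<Rightarrow> 'k) \<Rightarrow> 't \<Rightarrow> 'k) \<Rightarrow> ('u \<Rightarrow> 't)
     \<Rightarrow> ('i::finite \<Rightarrow> 'i \<Rightarrow> 'u::times) \<Rightarrow> ('i, 'u, 'k::comm_monoid_add) oneform
     \<Rightarrow> ('u \<Rightarrow> 'k) \<Rightarrow> ('i, 'u, 'k) oneform" where
  "rmult ev cop f w a = (\<lambda>j x. \<Sum>i\<in>UNIV. fmult ev cop (w i) (linv (f i j) a) x)"

definition dform :: "('i \<Rightarrow> 'u::times) \<Rightarrow> ('u \<Rightarrow> 'k) \<Rightarrow> ('i, 'u, 'k) oneform" where
  "dform t a = (\<lambda>i. linv (t i) a)"

end

theory Submission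
  imports Defs
begin

text \<open>
  The i-th component of d(ab) evaluated at x is (ab)(x t^i) = (a \<otimes> b)(\<Delta>x \<Delta>t^i), because
  \<Delta> is multiplicative. Inserting \<Delta>t^i = C \<otimes> t^i + t^j \<otimes> f_j^i and moving each pure tensor
  p \<otimes> q from the right of \<Delta>x into the arguments, (a \<otimes> b)(\<Delta>x (p \<otimes> q)) = (a_p b_q)(x) with
  a_p = a(- p), the two summands become c(a) t^i_L(b) and t^j_L(a) f_j^i(b_(1)) b_(2),
  i.e. the components of c(a) db and (da) b.
\<close>

context qea_pairing
begin

lemma ev_zero:
  assumes "a \<in> F" and "b \<in> F"
  shows "ev a b 0 = 0"
proof -
  have "ev a b (0 + 0) = ev a b 0 + ev a b 0"
    using assms by (rule ev_add)
  then show ?thesis by simp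
qed

lemma ev_sum:
  assumes "a \<in> F" and "b \<in> F" and "finite S"
  shows "ev a b (\<Sum>j\<in>S. T j) = (\<Sum>j\<in>S. ev a b (T j))"
  using assms(3) by (induction S rule: finite_induct) (simp_all add: assms ev_zero ev_add)

lemma linv_fmult:
  "linv u (fmult ev cop a b) x = ev a b (cop x * cop u)"
  by (simp add: linv_def fmult_def cop_mult)

lemma fmult_linv_linv:
  assumes "a \<in> F" and "b \<in> F"
  shows "fmult ev cop (linv p a) (linv q b) x = ev a b (cop x * tensor p q)"
  by (simp add: fmult_def linv_def ev_transl_right assms)

end

theorem mainTheorem4:
  fixes smult :: "'k::comm_ring_1 \<Rightarrow> 'u::ring_1 \<Rightarrow> 'u"
    and smultT :: "'k \<Rightarrow> 't::ring_1 \<Rightarrow> 't"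
    and tensor :: "'u \<Rightarrow> 'u \<Rightarrow> 't"
    and ev :: "('u \<Rightarrow> 'k) \<Rightarrow> ('u \<Rightarrow> 'k) \<Rightarrow> 't \<Rightarrow> 'k"
    and cop :: "'u \<Rightarrow> 't"
    and F :: "('u \<Rightarrow> 'k) set"
    and t :: "'i::finite \<Rightarrow> 'u"
    and sinv :: "'u \<Rightarrow> 'u"
    and adT :: "'t \<Rightarrow> 'u \<Rightarrow> 'u"
    and piPsi :: "'i \<Rightarrow> 'i \<Rightarrow> 'u \<Rightarrow> 'k"
    and C :: 'u
    and f :: "'i \<Rightarrow> 'i \<Rightarrow> 'u"
    and a b :: "'u \<Rightarrow> 'k"
  assumes "weak_qlie smult smultT tensor ev cop F t sinv adT piPsi"
    and "\<And>x. C * x = x * C"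
    and "\<And>i. cop (t i) = tensor C (t i) + (\<Sum>j\<in>UNIV. tensor (t j) (f j i))"
    and "a \<in> F" and "b \<in> F"
  shows "dform t (fmult ev cop a b)
       = oneform_add (lmult ev cop (linv C a) (dform t b)) (rmult ev cop f (dform t a) b)"
proof (intro ext)
  interpret weak_qlie smult smultT tensor ev cop F t sinv adT piPsi
    by (rule assms(1))
  fix i x
  have "dform t (fmult ev cop a b) i x = ev a b (cop x * cop (t i))"
    by (simp add: dform_def linv_fmult)
  also have "\<dots> = ev a b (cop x * tensor C (t i))
                  + (\<Sum>j\<in>UNIV. ev a b (cop x * tensor (t j) (f j i)))"
    by (simp add: assms(3-5) distrib_left sum_distrib_left ev_add ev_sum)
  also have "\<dots> = fmult ev cop (linv C a) (linv (t i) b) x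
                  + (\<Sum>j\<in>UNIV. fmult ev cop (linv (t j) a) (linv (f j i) b) x)"
    by (simp add: assms(4,5) fmult_linv_linv)
  also have "\<dots> = oneform_add (lmult ev cop (linv C a) (dform t b))
                    (rmult ev cop f (dform t a) b) i x"
    by (simp add: oneform_add_def lmult_def rmult_def dform_def)
  finally show "dform t (fmult ev cop a b) i x
      = oneform_add (lmult ev cop (linv C a) (dform t b)) (rmult ev cop f (dform t a) b) i x" .
qed

end
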